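(* Let $n\in\mathbb N$. The canonical $n$-tensors $L^n_\Omega$, restricted to $\mathcal P^{1/n}(\Omega)$ and to $\mathcal M^{1/n}(\Omega)$ respectively, form congruent families of $n$-tensors (of regularity $1/n$). Likewise, for every $0<r\le 1/n$, the canonical $n$-tensors $\tau^n_{\Omega;r}$ on $\mathcal P^r(\Omega)$ and on $\mathcal M^r(\Omega)$ respectively form congruent families of $n$-tensors of regularity $r$.
   Context: For a measurable space $\Omega$: $\mathcal S(\Omega)$ finite signed measures, $\mathcal M(\Omega)$ finite measures, $\mathcal P(\Omega)$ probability measures. For $r\in(0,1]$, $\mathcal S^r(\Omega)$ is the Banach lattice of $r$-th powers of finite signed measures, whose elements are $\phi\mu^r$ with $\mu\in\mathcal M(\Omega)$, $\phi\in L^{1/r}(\Omega,\mu)$ (with $\phi\mu^r=\psi\nu^r$ iff $\phi(d\mu/d\rho)^r=\psi(d\nu/d\rho)^r$ $\rho$-a.e. for a dominating $\rho$). $\mathcal M^r(\Omega)=\{\mu^r:\mu\in\mathcal M(\Omega)\}$, $\mathcal P^r(\Omega)=\{\mu^r:\mu\in\mathcal P(\Omega)\}$, with tangent spaces $T_{\mu^r}\mathcal M^r(\Omega)=\{\phi\mu^r:\phi\in L^{1/r}(\Omega,\mu)\}$ and $T_{\mu^r}\mathcal P^r(\Omega)=\{\phi\mu^r:\int\phi\,d\mu=0\}$. The canonical tensor $\tau^n_{\Omega;r}$ ($0<r\le1/n$) is $(\tau^n_{\Omega;r})_{\mu^r}(\phi_1\mu^r,\dots,\phi_n\mu^r)=r^{-n}\int_\Omega\phi_1\cdots\phi_n\,d\mu$,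 and $L^n_\Omega:=\tau^n_{\Omega;1/n}$, i.e. $L^n_\Omega(\phi_1\mu^{1/n},\dots,\phi_n\mu^{1/n})=n^n\int\phi_1\cdots\phi_n\,d\mu$. A Markov kernel $K:\Omega\to\mathcal P(\Omega')$ induces $K_*\mu(A')=\int K(\omega)(A')d\mu(\omega)$; it is congruent if there is a measurable $\kappa:\Omega'\to\Omega$ with $\kappa_*K(\omega)=\delta_\omega$ for all $\omega$. The formal derivative of $K_r(\mu^r)=(K_*\mu)^r$ at $\mu^r$ is $d_{\mu^r}K_r(\phi\mu^r)=\frac{d\{K_*(\phi\mu)\}}{d\mu'}\mu'^r$, $\mu'=K_*\mu$, and $(K_r^*\Psi)_{\mu^r}(V_1,\dots,V_n)=\Psi_{(K_*\mu)^r}(d_{\mu^r}K_rV_1,\dots,d_{\mu^r}K_rV_n)$. A family $(\Theta_\Omega)$ of $n$-tensor fields on $\mathcal M^r(\Omega)$ (or $\mathcal P^r(\Omega)$), one for each measurable space, is a congruent family of regularity $r$ if $K_r^*\Theta_{\Omega'}=\Theta_\Omega$ for every congruent Markov kernel $K:\Omega\to\mathcal P(\Omega')$. *)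

theory Defs
  imports "HOL-Probability.Probability"
begin

definition congruent_kernel :: "'a measure \<Rightarrow> 'b measure \<Rightarrow> ('a \<Rightarrow> 'b measure) \<Rightarrow> bool" where
  "congruent_kernel \<Omega> \<Omega>' K \<longleftrightarrow>
     K \<in> measurable \<Omega> (prob_algebra \<Omega>') \<and>
     (\<exists>\<kappa> \<in> measurable \<Omega>' \<Omega>. \<forall>\<omega>\<in>space \<Omega>. distr (K \<omega>) \<Omega> \<kappa> = return \<Omega> \<omega>)"

definition kernel_push :: "('a \<Rightarrow> 'b measure) \<Rightarrow> 'b measure \<Rightarrow> 'a measure \<Rightarrow> 'b measure" where
  "kernel_push K \<Omega>' \<mu> = measure_of (space \<Omega>') (sets \<Omega>') (\<lambda>A. \<integral>\<^sup>+\<omega>. emeasure (K \<omega>) A \<partial>\<mu>)"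

text \<open>psi is (a version of) the Radon-Nikodym derivative d K_*(phi mu) / d mu',
  mu' = K_* mu, where K_*(phi mu)(A') = integral of K(w)(A') phi(w) d mu(w) (a signed measure).\<close>
definition push_density ::
  "('a \<Rightarrow> 'b measure) \<Rightarrow> 'b measure \<Rightarrow> 'a measure \<Rightarrow> ('a \<Rightarrow> real) \<Rightarrow> ('b \<Rightarrow> real) \<Rightarrow> bool" where
  "push_density K \<Omega>' \<mu> \<phi> \<psi> \<longleftrightarrow>
     \<psi> \<in> borel_measurable \<Omega>' \<and> integrable (kernel_push K \<Omega>' \<mu>) \<psi> \<and>
     (\<forall>A\<in>sets \<Omega>'. (LINT x:A|kernel_push K \<Omega>' \<mu>. \<psi> x) = (\<integral>\<omega>. measure (K \<omega>) A * \<phi> \<omega> \<partial>\<mu>))"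

definition Lr :: "real \<Rightarrow> 'a measure \<Rightarrow> ('a \<Rightarrow> real) \<Rightarrow> bool" where
  "Lr r \<mu> \<phi> \<longleftrightarrow> \<phi> \<in> borel_measurable \<mu> \<and> integrable \<mu> (\<lambda>x. \<bar>\<phi> x\<bar> powr (1 / r))"

text \<open>Canonical tensor tau^n_{Omega;r} at mu^r on (phi_1 mu^r, ..., phi_n mu^r)
  (vectors indexed 0..n-1): r^{-n} * integral of phi_1 ... phi_n d mu.\<close>
definition canon_tensor :: "nat \<Rightarrow> real \<Rightarrow> 'a measure \<Rightarrow> (nat \<Rightarrow> 'a \<Rightarrow> real) \<Rightarrow> real" where
  "canon_tensor n r \<mu> \<phi> = (1 / r) ^ n * (\<integral>x. (\<Prod>i<n. \<phi> i x) \<partial>\<mu>)"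

text \<open>(K_r^* tau_{Omega'})_{mu^r}(V_1..V_n) = (tau_Omega)_{mu^r}(V_1..V_n), where
  d K_r (phi_i mu^r) = psi_i mu'^r with psi_i = d K_*(phi_i mu)/d mu' (any version).\<close>
definition pullback_identity ::
  "nat \<Rightarrow> real \<Rightarrow> 'b measure \<Rightarrow> ('a \<Rightarrow> 'b measure) \<Rightarrow> 'a measure \<Rightarrow> (nat \<Rightarrow> 'a \<Rightarrow> real) \<Rightarrow> bool" where
  "pullback_identity n r \<Omega>' K \<mu> \<phi> \<longleftrightarrow>
     (\<forall>\<psi>. (\<forall>i<n. push_density K \<Omega>' \<mu> (\<phi> i) (\<psi> i)) \<longrightarrow>
        canon_tensor n r (kernel_push K \<Omega>' \<mu>) \<psi> = canon_tensor n r \<mu> \<phi>)"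

definition invariant_M :: "nat \<Rightarrow> real \<Rightarrow> 'a measure \<Rightarrow> 'b measure \<Rightarrow> ('a \<Rightarrow> 'b measure) \<Rightarrow> bool" where
  "invariant_M n r \<Omega> \<Omega>' K \<longleftrightarrow>
     (\<forall>\<mu> \<phi>. finite_measure \<mu> \<and> sets \<mu> = sets \<Omega> \<and> (\<forall>i<n. Lr r \<mu> (\<phi> i))
        \<longrightarrow> pullback_identity n r \<Omega>' K \<mu> \<phi>)"

definition invariant_P :: "nat \<Rightarrow> real \<Rightarrow> 'a measure \<Rightarrow> 'b measure \<Rightarrow> ('a \<Rightarrow> 'b measure) \<Rightarrow> bool" where
  "invariant_P n r \<Omega> \<Omega>' K \<longleftrightarrow>
     (\<forall>\<mu> \<phi>. prob_space \<mu> \<and> sets \<mu> = sets \<Omega> \<and>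
        (\<forall>i<n. Lr r \<mu> (\<phi> i) \<and> (\<integral>x. \<phi> i x \<partial>\<mu>) = 0)
        \<longrightarrow> pullback_identity n r \<Omega>' K \<mu> \<phi>)"

end

theory Submission
  imports Defs
begin

text \<open>Let \<open>\<kappa>\<close> be a measurable left inverse of the congruent kernel \<open>K\<close>, so that
  \<open>\<kappa>\<^sub>*K(\<omega>) = \<delta>\<^sub>\<omega>\<close>. Then \<open>K(\<omega>)\<close>-almost surely \<open>\<kappa> y \<in> B \<longleftrightarrow> \<omega> \<in> B\<close>, which gives
  \<open>\<kappa>\<^sub>*(1\<^sub>A \<cdot> K\<^sub>*\<mu>) = K(\<cdot>)(A) \<cdot> \<mu>\<close> for every measurable \<open>A\<close>. Hence \<open>\<kappa>\<^sub>*K\<^sub>*\<mu> = \<mu>\<close>, and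
  \<open>\<phi> \<circ> \<kappa>\<close> is a density of \<open>K\<^sub>*(\<phi>\<mu>)\<close> with respect to \<open>K\<^sub>*\<mu>\<close>; by uniqueness of densities every
  version \<open>\<psi>\<^sub>i\<close> of the formal derivative agrees a.e. with \<open>\<phi>\<^sub>i \<circ> \<kappa>\<close>. Therefore
  \<open>\<integral> \<Prod> \<psi>\<^sub>i dK\<^sub>*\<mu> = \<integral> \<Prod> \<phi>\<^sub>i \<circ> \<kappa> dK\<^sub>*\<mu> = \<integral> \<Prod> \<phi>\<^sub>i d\<mu>\<close>. The only use of \<open>r \<le> 1\<close> is that
  \<open>L\<^sup>1\<^sup>/\<^sup>r(\<mu>) \<subseteq> L\<^sup>1(\<mu>)\<close> for finite \<open>\<mu>\<close>.\<close>

lemma sets_kernel_push [simp]: "sets (kernel_push K \<Omega>' \<mu>) = sets \<Omega>'"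
  by (simp add: kernel_push_def sets.space_closed)

lemma space_kernel_push [simp]: "space (kernel_push K \<Omega>' \<mu>) = space \<Omega>'"
  using sets_kernel_push by (rule sets_eq_imp_space_eq)

lemma emeasure_kernel_push:
  assumes K: "K \<in> \<mu> \<rightarrow>\<^sub>M subprob_algebra \<Omega>'" and A: "A \<in> sets \<Omega>'"
  shows "emeasure (kernel_push K \<Omega>' \<mu>) A = (\<integral>\<^sup>+\<omega>. emeasure (K \<omega>) A \<partial>\<mu>)"
proof (cases "space \<mu> = {}")
  \<comment> \<open>\<open>\<mu> \<bind> K\<close> is \<open>count_space {}\<close> on an empty space, so this case cannot go through \<open>bind\<close>.\<close>
  case True
  then have "kernel_push K \<Omega>' \<mu> = null_measure \<Omega>'"
    by (simp add: kernel_push_def null_measure_def nn_integral_empty)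
  with True show ?thesis by (simp add: nn_integral_empty)
next
  case False
  have sets_bind: "sets (\<mu> \<bind> K) = sets \<Omega>'"
    using K False by (rule sets_bind_measurable)
  have "kernel_push K \<Omega>' \<mu> = measure_of (space \<Omega>') (sets \<Omega>') (emeasure (\<mu> \<bind> K))"
    unfolding kernel_push_def
    using emeasure_bind[OF False K] sets.space_closed[of \<Omega>']
    by (intro measure_of_eq) (auto simp: sets.sigma_sets_eq)
  also have "\<dots> = \<mu> \<bind> K"
    using measure_of_of_measure[of "\<mu> \<bind> K"] sets_bind sets_eq_imp_space_eq[OF sets_bind] by simp
  finally show ?thesis
    using emeasure_bind[OF False K A] by simp
qed

locale congruent_markov_kernel =
  fixes \<Omega> :: "'a measure" and \<Omega>' :: "'b measure" and K :: "'a \<Rightarrow> 'b measure" and \<kappa> :: "'b \<Rightarrow> 'a"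
  assumes K_measurable: "K \<in> \<Omega> \<rightarrow>\<^sub>M prob_algebra \<Omega>'"
    and left_inverse_measurable: "\<kappa> \<in> \<Omega>' \<rightarrow>\<^sub>M \<Omega>"
    and distr_left_inverse: "\<And>\<omega>. \<omega> \<in> space \<Omega> \<Longrightarrow> distr (K \<omega>) \<Omega> \<kappa> = return \<Omega> \<omega>"
begin

lemma prob_space_K: "\<omega> \<in> space \<Omega> \<Longrightarrow> prob_space (K \<omega>)"
  using measurable_space[OF K_measurable] by (auto simp: space_prob_algebra)

lemma sets_K: "\<omega> \<in> space \<Omega> \<Longrightarrow> sets (K \<omega>) = sets \<Omega>'"
  using measurable_space[OF K_measurable] by (auto simp: space_prob_algebra)

lemma AE_K_left_inverse_mem:
  assumes \<omega>: "\<omega> \<in> space \<Omega>" and B[measurable]: "B \<in> sets \<Omega>"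
  shows "AE y in K \<omega>. \<kappa> y \<in> B \<longleftrightarrow> \<omega> \<in> B"
proof -
  have "AE x in distr (K \<omega>) \<Omega> \<kappa>. x \<in> B \<longleftrightarrow> \<omega> \<in> B"
    unfolding distr_left_inverse[OF \<omega>] using \<omega> by (subst AE_return) auto
  moreover have "\<kappa> \<in> K \<omega> \<rightarrow>\<^sub>M \<Omega>"
    using left_inverse_measurable measurable_cong_sets[OF sets_K[OF \<omega>] refl] by blast
  ultimately show ?thesis
    using B by (subst (asm) AE_distr_iff) auto
qed

lemma emeasure_K_Int_vimage:
  assumes \<omega>: "\<omega> \<in> space \<Omega>" and A: "A \<in> sets \<Omega>'" and B: "B \<in> sets \<Omega>"
  shows "emeasure (K \<omega>) (A \<inter> (\<kappa> -` B \<inter> space \<Omega>')) = indicator B \<omega> * emeasure (K \<omega>) A"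
proof -
  have sets: "A \<in> sets (K \<omega>)" "A \<inter> (\<kappa> -` B \<inter> space \<Omega>') \<in> sets (K \<omega>)"
    using A measurable_sets[OF left_inverse_measurable B] sets_K[OF \<omega>] by auto
  have "AE y in K \<omega>. y \<in> A \<inter> (\<kappa> -` B \<inter> space \<Omega>') \<longleftrightarrow> y \<in> (if \<omega> \<in> B then A else {})"
    using AE_K_left_inverse_mem[OF \<omega> B] AE_space
    by eventually_elim (auto simp: sets_K[OF \<omega>, THEN sets_eq_imp_space_eq])
  from emeasure_eq_AE[OF this] sets show ?thesis
    by (simp split: split_indicator)
qed

context
  fixes \<mu> :: "'a measure"
  assumes sets_\<mu>: "sets \<mu> = sets \<Omega>"
begin

lemma K_measurable_subprob: "K \<in> \<mu> \<rightarrow>\<^sub>M subprob_algebra \<Omega>'"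
  using measurable_prob_algebraD[OF K_measurable] measurable_cong_sets[OF sets_\<mu> refl] by blast

lemma left_inverse_measurable_kernel_push: "\<kappa> \<in> kernel_push K \<Omega>' \<mu> \<rightarrow>\<^sub>M \<Omega>"
  using left_inverse_measurable measurable_cong_sets[OF sets_kernel_push refl] by blast

lemma measure_K_measurable: "A \<in> sets \<Omega>' \<Longrightarrow> (\<lambda>\<omega>. measure (K \<omega>) A) \<in> borel_measurable \<mu>"
  using measurable_compose[OF K_measurable measurable_measure_prob_algebra] measurable_cong_sets[OF sets_\<mu> refl]
  by blast

lemma distr_density_kernel_push:
  assumes A: "A \<in> sets \<Omega>'"
  shows "distr (density (kernel_push K \<Omega>' \<mu>) (indicator A)) \<Omega> \<kappa> = density \<mu> (\<lambda>\<omega>. measure (K \<omega>) A)"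
proof (rule measure_eqI)
  fix B assume "B \<in> sets (distr (density (kernel_push K \<Omega>' \<mu>) (indicator A)) \<Omega> \<kappa>)"
  then have B: "B \<in> sets \<Omega>" by simp
  have pre: "\<kappa> -` B \<inter> space \<Omega>' \<in> sets \<Omega>'"
    using measurable_sets[OF left_inverse_measurable B] .
  have "emeasure (distr (density (kernel_push K \<Omega>' \<mu>) (indicator A)) \<Omega> \<kappa>) B
      = emeasure (kernel_push K \<Omega>' \<mu>) (A \<inter> (\<kappa> -` B \<inter> space \<Omega>'))"
    using left_inverse_measurable_kernel_push A B pre by (simp add: emeasure_distr emeasure_restricted)
  also have "\<dots> = (\<integral>\<^sup>+\<omega>. indicator B \<omega> * emeasure (K \<omega>) A \<partial>\<mu>)"
    using A pre sets_eq_imp_space_eq[OF sets_\<mu>]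
    by (auto simp: emeasure_kernel_push[OF K_measurable_subprob] emeasure_K_Int_vimage B
             intro!: nn_integral_cong)
  also have "\<dots> = emeasure (density \<mu> (\<lambda>\<omega>. measure (K \<omega>) A)) B"
    using B sets_\<mu> sets_eq_imp_space_eq[OF sets_\<mu>] measure_K_measurable[OF A]
    by (subst emeasure_density)
       (auto simp: finite_measure.emeasure_eq_measure[OF prob_space.finite_measure, OF prob_space_K]
             mult.commute intro!: nn_integral_cong)
  finally show "emeasure (distr (density (kernel_push K \<Omega>' \<mu>) (indicator A)) \<Omega> \<kappa>) B
      = emeasure (density \<mu> (\<lambda>\<omega>. measure (K \<omega>) A)) B" .
qed (simp add: sets_\<mu>)

lemma distr_kernel_push: "distr (kernel_push K \<Omega>' \<mu>) \<Omega> \<kappa> = \<mu>"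
proof -
  have "kernel_push K \<Omega>' \<mu> = density (kernel_push K \<Omega>' \<mu>) (indicator (space \<Omega>'))"
    by (subst density_cong[where f'="\<lambda>_. 1"]) (auto simp: density_1 intro!: borel_measurable_indicator)
  moreover have "density \<mu> (\<lambda>\<omega>. measure (K \<omega>) (space \<Omega>')) = \<mu>"
  proof -
    have "measure (K \<omega>) (space \<Omega>') = 1" if "\<omega> \<in> space \<mu>" for \<omega>
      using that sets_eq_imp_space_eq[OF sets_\<mu>] sets_eq_imp_space_eq[OF sets_K]
        prob_space.prob_space[OF prob_space_K] by force
    then show ?thesis
      using measure_K_measurable[of "space \<Omega>'"]
      by (subst density_cong[where f'="\<lambda>_. 1"]) (auto simp: density_1)
  qed
  ultimately show ?thesis
    using distr_density_kernel_push[of "space \<Omega>'"] by simp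
qed

lemma set_integral_kernel_push_left_inverse:
  fixes \<phi> :: "'a \<Rightarrow> real"
  assumes \<phi>[measurable]: "\<phi> \<in> borel_measurable \<Omega>" and A[measurable]: "A \<in> sets \<Omega>'"
  shows "(LINT y:A|kernel_push K \<Omega>' \<mu>. \<phi> (\<kappa> y)) = (\<integral>\<omega>. measure (K \<omega>) A * \<phi> \<omega> \<partial>\<mu>)"
proof -
  have \<kappa>[measurable]: "\<kappa> \<in> kernel_push K \<Omega>' \<mu> \<rightarrow>\<^sub>M \<Omega>"
    by (rule left_inverse_measurable_kernel_push)
  have "(LINT y:A|kernel_push K \<Omega>' \<mu>. \<phi> (\<kappa> y))
      = (\<integral>y. \<phi> (\<kappa> y) \<partial>density (kernel_push K \<Omega>' \<mu>) (indicator A))"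
  proof -
    have "(\<lambda>y. ennreal (indicator A y)) = indicator A"
      by (auto simp: fun_eq_iff split: split_indicator)
    moreover have "(indicator A :: 'b \<Rightarrow> real) \<in> borel_measurable (kernel_push K \<Omega>' \<mu>)"
      using A by (intro borel_measurable_indicator) simp
    ultimately show ?thesis
      using integral_density[of "\<lambda>y. \<phi> (\<kappa> y)" "kernel_push K \<Omega>' \<mu>" "indicator A"]
      by (simp add: set_lebesgue_integral_def)
  qed
  also have "\<dots> = (\<integral>\<omega>. \<phi> \<omega> \<partial>density \<mu> (\<lambda>\<omega>. measure (K \<omega>) A))"
    using integral_distr[OF _ \<phi>, of \<kappa> "density (kernel_push K \<Omega>' \<mu>) (indicator A)"]
    by (simp add: distr_density_kernel_push)
  also have "\<dots> = (\<integral>\<omega>. measure (K \<omega>) A * \<phi> \<omega> \<partial>\<mu>)"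
  proof -
    have "\<phi> \<in> borel_measurable \<mu>"
      using \<phi> measurable_cong_sets[OF sets_\<mu> refl] by blast
    then show ?thesis
      using measure_K_measurable[OF A] by (simp add: integral_density)
  qed
  finally show ?thesis .
qed

lemma push_density_AE_eq_left_inverse:
  fixes \<phi> :: "'a \<Rightarrow> real"
  assumes \<phi>: "\<phi> \<in> borel_measurable \<Omega>" "integrable \<mu> \<phi>"
    and \<psi>: "push_density K \<Omega>' \<mu> \<phi> \<psi>"
  shows "AE y in kernel_push K \<Omega>' \<mu>. \<psi> y = \<phi> (\<kappa> y)"
proof (rule density_unique_real)
  show "integrable (kernel_push K \<Omega>' \<mu>) \<psi>"
    using \<psi> by (simp add: push_density_def)
  show "integrable (kernel_push K \<Omega>' \<mu>) (\<lambda>y. \<phi> (\<kappa> y))"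
    using integrable_distr_eq[OF left_inverse_measurable_kernel_push \<phi>(1)] \<phi>(2)
    by (simp add: distr_kernel_push)
  fix A assume "A \<in> sets (kernel_push K \<Omega>' \<mu>)"
  then show "(LINT y:A|kernel_push K \<Omega>' \<mu>. \<psi> y) = (LINT y:A|kernel_push K \<Omega>' \<mu>. \<phi> (\<kappa> y))"
    using \<psi> \<phi>(1) by (simp add: push_density_def set_integral_kernel_push_left_inverse)
qed

lemma canon_tensor_kernel_push:
  fixes \<phi> :: "nat \<Rightarrow> 'a \<Rightarrow> real"
  assumes \<phi>: "\<And>i. i < n \<Longrightarrow> \<phi> i \<in> borel_measurable \<Omega>" "\<And>i. i < n \<Longrightarrow> integrable \<mu> (\<phi> i)"
    and \<psi>: "\<And>i. i < n \<Longrightarrow> push_density K \<Omega>' \<mu> (\<phi> i) (\<psi> i)"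
  shows "canon_tensor n r (kernel_push K \<Omega>' \<mu>) \<psi> = canon_tensor n r \<mu> \<phi>"
proof -
  have \<kappa>: "\<kappa> \<in> kernel_push K \<Omega>' \<mu> \<rightarrow>\<^sub>M \<Omega>"
    by (rule left_inverse_measurable_kernel_push)
  have "AE y in kernel_push K \<Omega>' \<mu>. \<forall>i\<in>{..<n}. \<psi> i y = \<phi> i (\<kappa> y)"
    using push_density_AE_eq_left_inverse[OF \<phi> \<psi>] by (intro AE_finite_allI) auto
  then have "AE y in kernel_push K \<Omega>' \<mu>. (\<Prod>i<n. \<psi> i y) = (\<Prod>i<n. \<phi> i (\<kappa> y))"
    by eventually_elim (auto intro: prod.cong)
  then have "(\<integral>y. (\<Prod>i<n. \<psi> i y) \<partial>kernel_push K \<Omega>' \<mu>) = (\<integral>y. (\<Prod>i<n. \<phi> i (\<kappa> y)) \<partial>kernel_push K \<Omega>' \<mu>)"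
    using \<psi> measurable_compose[OF \<kappa> \<phi>(1)]
    by (intro integral_cong_AE borel_measurable_prod) (auto simp: push_density_def)
  also have "\<dots> = (\<integral>x. (\<Prod>i<n. \<phi> i x) \<partial>\<mu>)"
    using integral_distr[OF \<kappa>, of "\<lambda>x. \<Prod>i<n. \<phi> i x"] \<phi>(1)
    by (simp add: distr_kernel_push borel_measurable_prod)
  finally show ?thesis
    by (simp add: canon_tensor_def)
qed

end

end

lemma integrable_if_integrable_abs_powr:
  fixes f :: "'a \<Rightarrow> real"
  assumes "finite_measure \<mu>" and p: "1 \<le> p"
    and f: "f \<in> borel_measurable \<mu>" and int: "integrable \<mu> (\<lambda>x. \<bar>f x\<bar> powr p)"
  shows "integrable \<mu> f"
proof (rule Bochner_Integration.integrable_bound)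
  interpret finite_measure \<mu> by fact
  show "integrable \<mu> (\<lambda>x. 1 + \<bar>f x\<bar> powr p)"
    using int by simp
  have "norm (f x) \<le> norm (1 + \<bar>f x\<bar> powr p)" for x
  proof (cases "\<bar>f x\<bar> \<le> 1")
    case False
    then have "\<bar>f x\<bar> powr 1 \<le> \<bar>f x\<bar> powr p"
      using p by (intro powr_mono) auto
    with False show ?thesis by simp
  qed (use powr_ge_zero[of "\<bar>f x\<bar>" p] in \<open>simp add: add_increasing2\<close>)
  then show "AE x in \<mu>. norm (f x) \<le> norm (1 + \<bar>f x\<bar> powr p)"
    by simp
qed (fact f)

lemma congruent_kernelE:
  assumes "congruent_kernel \<Omega> \<Omega>' K"
  obtains \<kappa> where "congruent_markov_kernel \<Omega> \<Omega>' K \<kappa>"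
  using assms unfolding congruent_kernel_def congruent_markov_kernel_def by blast

lemma invariant_M_if_congruent_kernel:
  assumes "congruent_kernel \<Omega> \<Omega>' K" and r: "0 < r" "r \<le> 1"
  shows "invariant_M n r \<Omega> \<Omega>' K"
  unfolding invariant_M_def pullback_identity_def
proof (intro allI impI)
  fix \<mu> :: "'a measure" and \<phi> :: "nat \<Rightarrow> 'a \<Rightarrow> real" and \<psi> :: "nat \<Rightarrow> 'b \<Rightarrow> real"
  assume \<mu>: "finite_measure \<mu> \<and> sets \<mu> = sets \<Omega> \<and> (\<forall>i<n. Lr r \<mu> (\<phi> i))"
    and \<psi>: "\<forall>i<n. push_density K \<Omega>' \<mu> (\<phi> i) (\<psi> i)"
  obtain \<kappa> where "congruent_markov_kernel \<Omega> \<Omega>' K \<kappa>"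
    using assms(1) by (rule congruent_kernelE)
  moreover have "\<phi> i \<in> borel_measurable \<Omega>" "integrable \<mu> (\<phi> i)" if "i < n" for i
    using \<mu> that measurable_cong_sets[of \<mu> \<Omega> borel borel] r
      integrable_if_integrable_abs_powr[of \<mu> "1 / r" "\<phi> i"]
    by (auto simp: Lr_def)
  ultimately show "canon_tensor n r (kernel_push K \<Omega>' \<mu>) \<psi> = canon_tensor n r \<mu> \<phi>"
    using \<mu> \<psi> by (intro congruent_markov_kernel.canon_tensor_kernel_push) auto
qed

lemma invariant_P_if_congruent_kernel:
  assumes "congruent_kernel \<Omega> \<Omega>' K" and "0 < r" "r \<le> 1"
  shows "invariant_P n r \<Omega> \<Omega>' K"
  using invariant_M_if_congruent_kernel[OF assms, of n]
  unfolding invariant_P_def invariant_M_def by (blast intro: prob_space.finite_measure)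

theorem proposition3p6:
  fixes n :: nat and \<Omega> :: "'a measure" and \<Omega>' :: "'b measure" and K :: "'a \<Rightarrow> 'b measure"
  assumes "n \<ge> 1"
    and "congruent_kernel \<Omega> \<Omega>' K"
  shows "invariant_P n (1 / real n) \<Omega> \<Omega>' K \<and> invariant_M n (1 / real n) \<Omega> \<Omega>' K \<and>
         (\<forall>r. 0 < r \<and> r \<le> 1 / real n \<longrightarrow> invariant_P n r \<Omega> \<Omega>' K \<and> invariant_M n r \<Omega> \<Omega>' K)"
proof -
  have "invariant_P n r \<Omega> \<Omega>' K \<and> invariant_M n r \<Omega> \<Omega>' K" if "0 < r" "r \<le> 1 / real n" for r
  proof -
    have "r \<le> 1"
      using that(2) assms(1) by (simp add: order_trans)
    with that(1) show ?thesis
      using invariant_P_if_congruent_kernel[OF assms(2)] invariant_M_if_congruent_kernel[OF assms(2)]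
      by blast
  qed
  moreover have "0 < 1 / real n"
    using assms(1) by simp
  ultimately show ?thesis
    by blast
qed

end
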